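(* Let $H=(T_1,\dots,T_n,p_1,\dots,p_n)$ be any strategic game. Then for the operator $\overline{GS}$ on the lattice of restrictions of $H$: (i) the largest fixpoint of $\overline{GS}$ exists and equals its outcome; (ii) $\overline{GS}$ is order independent; (iii) for every relaxation $R$ of $\overline{GS}$ and every ordinal $\alpha$, $\overline{GS}^{\alpha}\subseteq R^{\alpha}$.
   Context: A strategic game $H=(T_1,\dots,T_n,p_1,\dots,p_n)$ has nonempty strategy sets $T_i$ and payoffs $p_i:T_1\times\dots\times T_n\to\mathbb R$. A restriction is $G=(S_1,\dots,S_n)$ with $S_i\subseteq T_i$ (possibly empty), ordered by componentwise inclusion (a complete lattice with top $H$). For $s_i,s_i'\in T_i$, $s_i'\succ_G s_i$ means $p_i(s_i',s_{-i})>p_i(s_i,s_{-i})$ for all $s_{-i}\in S_{-i}:=\prod_{j\ne i}S_j$ (vacuously true if $S_{-i}=\emptyset$). $GS(G):=(S_1',\dots,S_n')$ with $S_i':=\{s_i\in T_i\mid\neg\exists s_i'\in T_i:\ s_i'\succ_G s_i\}$, and $\overline{GS}(G):=GS(G)\cap G$. Operator notions: fixpoint $T(G)=G$; iterations $T^0:=H$, $T^{\alpha+1}:=T(T^\alpha)$, $T^\beta:=\bigcap_{\alpha<\beta}T^\alpha$ for limit $\beta$; outcome $T^{\alpha_T}$ with $\alpha_T$ the least $\alpha$ such that $T^{\alpha+1}=T^\alpha$. $R$ is a relaxation of $T$ if for all ordinals $\alpha$: (1) $T(R^\alpha)\subseteq R(R^\alpha)$; (2) if $T(R^\alpha)\subseteq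 R^\alpha$ then $R(R^\alpha)\subseteq R^\alpha$; (3) if $R(R^\alpha)=R^\alpha$ then $T(R^\alpha)=R^\alpha$. $T$ is order independent if the set of outcomes of relaxations of $T$ has at most one element. *)

theory Defs
  imports Complex_Main
begin

text \<open>A strategic game: players are the elements of a finite type 'i, strategy sets
  T i :: 'a set (nonempty), payoffs p i :: ('i \<Rightarrow> 'a) \<Rightarrow> real on strategy profiles.
  Restrictions G = (S_1,...,S_n) are functions S :: 'i \<Rightarrow> 'a set with S i \<subseteq> T i,
  ordered componentwise by the pointwise order \<le> on functions.\<close>

definition restriction :: "('i \<Rightarrow> 'a set) \<Rightarrow> ('i \<Rightarrow> 'a set) \<Rightarrow> bool" where
  "restriction T S \<longleftrightarrow> (\<forall>i. S i \<subseteq> T i)"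

text \<open>s' strictly dominates s for player i given restriction S (quantifying over all
  s_{-i} in S_{-i}; a full profile t whose i-th entry is overwritten).\<close>
definition sdom :: "('i \<Rightarrow> ('i \<Rightarrow> 'a) \<Rightarrow> real) \<Rightarrow> ('i \<Rightarrow> 'a set) \<Rightarrow> 'i \<Rightarrow> 'a \<Rightarrow> 'a \<Rightarrow> bool" where
  "sdom p S i s' s \<longleftrightarrow> (\<forall>t. (\<forall>j. j \<noteq> i \<longrightarrow> t j \<in> S j) \<longrightarrow> p i (t(i := s')) > p i (t(i := s)))"

definition GS :: "('i \<Rightarrow> 'a set) \<Rightarrow> ('i \<Rightarrow> ('i \<Rightarrow> 'a) \<Rightarrow> real) \<Rightarrow> ('i \<Rightarrow> 'a set) \<Rightarrow> ('i \<Rightarrow> 'a set)" where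
  "GS T p S = (\<lambda>i. {s \<in> T i. \<not> (\<exists>s' \<in> T i. sdom p S i s' s)})"

definition GSbar :: "('i \<Rightarrow> 'a set) \<Rightarrow> ('i \<Rightarrow> ('i \<Rightarrow> 'a) \<Rightarrow> real) \<Rightarrow> ('i \<Rightarrow> 'a set) \<Rightarrow> ('i \<Rightarrow> 'a set)" where
  "GSbar T p S = (\<lambda>i. GS T p S i \<inter> S i)"

definition operator_on :: "('i \<Rightarrow> 'a set) \<Rightarrow> (('i \<Rightarrow> 'a set) \<Rightarrow> ('i \<Rightarrow> 'a set)) \<Rightarrow> bool" where
  "operator_on T F \<longleftrightarrow> (\<forall>S. restriction T S \<longrightarrow> restriction T (F S))"

text \<open>Infimum in the lattice of restrictions of the game with strategy sets T
  (the infimum of the empty family is the top element T).\<close>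
definition rInf :: "('i \<Rightarrow> 'a set) \<Rightarrow> ('i \<Rightarrow> 'a set) set \<Rightarrow> ('i \<Rightarrow> 'a set)" where
  "rInf T A = (\<lambda>i. T i \<inter> (\<Inter>S\<in>A. S i))"

text \<open>Ordinals are modelled by the elements of a well-ordered index type 'o.
  beta is the immediate predecessor of alpha iff alpha = beta + 1.\<close>
definition imm_pred :: "'o::wellorder \<Rightarrow> 'o \<Rightarrow> bool" where
  "imm_pred \<beta> \<alpha> \<longleftrightarrow> \<beta> < \<alpha> \<and> \<not> (\<exists>\<gamma>. \<beta> < \<gamma> \<and> \<gamma> < \<alpha>)"

text \<open>Transfinite iteration: F^0 = T (top), F^(beta+1) = F(F^beta),
  F^alpha = Inf of F^beta for beta < alpha at limits.\<close>
definition iter :: "('i \<Rightarrow> 'a set) \<Rightarrow> (('i \<Rightarrow> 'a set) \<Rightarrow> ('i \<Rightarrow> 'a set)) \<Rightarrow> 'o::wellorder \<Rightarrow> ('i \<Rightarrow> 'a set)" where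
  "iter T F = wfrec {(x, y). x < y}
     (\<lambda>rec \<alpha>. if \<exists>\<beta>. imm_pred \<beta> \<alpha> then F (rec (THE \<beta>. imm_pred \<beta> \<alpha>))
              else rInf T (rec ` {\<beta>. \<beta> < \<alpha>}))"

definition stable :: "('i \<Rightarrow> 'a set) \<Rightarrow> (('i \<Rightarrow> 'a set) \<Rightarrow> ('i \<Rightarrow> 'a set)) \<Rightarrow> 'o::wellorder \<Rightarrow> bool" where
  "stable T F \<alpha> \<longleftrightarrow> F (iter T F \<alpha>) = iter T F \<alpha>"

definition has_outcome :: "('i \<Rightarrow> 'a set) \<Rightarrow> (('i \<Rightarrow> 'a set) \<Rightarrow> ('i \<Rightarrow> 'a set)) \<Rightarrow> 'o::wellorder itself \<Rightarrow> bool" where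
  "has_outcome T F _ \<longleftrightarrow> (\<exists>\<alpha>::'o. stable T F \<alpha>)"

definition outcome :: "('i \<Rightarrow> 'a set) \<Rightarrow> (('i \<Rightarrow> 'a set) \<Rightarrow> ('i \<Rightarrow> 'a set)) \<Rightarrow> 'o::wellorder itself \<Rightarrow> ('i \<Rightarrow> 'a set)" where
  "outcome T F _ = iter T F (LEAST \<alpha>::'o. stable T F \<alpha>)"

definition relaxation :: "('i \<Rightarrow> 'a set) \<Rightarrow> (('i \<Rightarrow> 'a set) \<Rightarrow> ('i \<Rightarrow> 'a set)) \<Rightarrow> (('i \<Rightarrow> 'a set) \<Rightarrow> ('i \<Rightarrow> 'a set)) \<Rightarrow> 'o::wellorder itself \<Rightarrow> bool" where
  "relaxation T F R _ \<longleftrightarrow> operator_on T R \<and>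
     (\<forall>\<alpha>::'o.
        F (iter T R \<alpha>) \<le> R (iter T R \<alpha>) \<and>
        (F (iter T R \<alpha>) \<le> iter T R \<alpha> \<longrightarrow> R (iter T R \<alpha>) \<le> iter T R \<alpha>) \<and>
        (R (iter T R \<alpha>) = iter T R \<alpha> \<longrightarrow> F (iter T R \<alpha>) = iter T R \<alpha>))"

definition order_independent :: "('i \<Rightarrow> 'a set) \<Rightarrow> (('i \<Rightarrow> 'a set) \<Rightarrow> ('i \<Rightarrow> 'a set)) \<Rightarrow> 'o::wellorder itself \<Rightarrow> bool" where
  "order_independent T F ot \<longleftrightarrow>
     (\<forall>X Y. X \<in> {outcome T R ot | R. relaxation T F R ot \<and> has_outcome T R ot} \<longrightarrow>
            Y \<in> {outcome T R ot | R. relaxation T F R ot \<and> has_outcome T R ot} \<longrightarrow> X = Y)"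

end

theory Submission
  imports Defs
begin

text \<open>Only two properties of \<open>GSbar T p\<close> matter: it is contracting (\<open>GSbar T p S \<le> S\<close>) and
  monotone (shrinking a restriction can only weaken strict dominance). Hence its iterates form a
  descending chain that lies above every fixpoint; a strictly descending chain of restrictions
  would inject the ordinals into restrictions, so the chain stabilises, at the largest fixpoint.
  For a relaxation \<open>R\<close>, monotonicity and condition (1) give \<open>GSbar\<^sup>\<alpha> \<le> R\<^sup>\<alpha>\<close> by transfinite
  induction, and condition (3) makes the outcome of \<open>R\<close> a fixpoint of \<open>GSbar\<close>; squeezed between
  the two, it equals the outcome of \<open>GSbar\<close>.\<close>

lemma imm_pred_unique: "imm_pred b a \<Longrightarrow> imm_pred c a \<Longrightarrow> b = c"
  unfolding imm_pred_def by (metis linorder_neqE)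

lemma imm_pred_less: "imm_pred b a \<Longrightarrow> b < a"
  by (simp add: imm_pred_def)

lemma le_imm_pred_cases: "imm_pred b a \<Longrightarrow> x \<le> a \<Longrightarrow> x = a \<or> x \<le> b"
  unfolding imm_pred_def by (metis not_le order.not_eq_order_implies_strict)

lemma ex_imm_pred_le:
  fixes a b :: "'o::wellorder"
  assumes "a < b"
  shows "\<exists>s. imm_pred a s \<and> s \<le> b"
proof -
  define s where "s = (LEAST g. a < g)"
  have "a < s" unfolding s_def using assms by (rule LeastI)
  then have "imm_pred a s" unfolding imm_pred_def s_def by (metis not_less_Least)
  moreover have "s \<le> b" unfolding s_def using assms by (rule Least_le)
  ultimately show ?thesis by blast
qed

lemma successor_limit_induct [case_names successor limit]:
  fixes a :: "'o::wellorder"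
  assumes successor: "\<And>a b. imm_pred b a \<Longrightarrow> P b \<Longrightarrow> P a"
    and limit: "\<And>a. \<not> (\<exists>b. imm_pred b a) \<Longrightarrow> (\<And>b. b < a \<Longrightarrow> P b) \<Longrightarrow> P a"
  shows "P a"
proof (induction a rule: less_induct)
  case (less a)
  show ?case
  proof (cases "\<exists>b. imm_pred b a")
    case True
    then obtain b where "imm_pred b a" by blast
    with less imm_pred_less show ?thesis by (blast intro: successor)
  next
    case False
    with less show ?thesis by (blast intro: limit)
  qed
qed

lemma iter_unfold:
  fixes \<alpha> :: "'o::wellorder"
  shows "iter T F \<alpha> = (if \<exists>\<beta>. imm_pred \<beta> \<alpha> then F (iter T F (THE \<beta>. imm_pred \<beta> \<alpha>))
              else rInf T (iter T F ` {\<beta>. \<beta> < \<alpha>}))"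
proof -
  have "iter T F \<alpha> = (\<lambda>rec \<alpha>. if \<exists>\<beta>. imm_pred \<beta> \<alpha> then F (rec (THE \<beta>. imm_pred \<beta> \<alpha>))
              else rInf T (rec ` {\<beta>. \<beta> < \<alpha>})) (cut (iter T F) {(x, y). x < y} \<alpha>) \<alpha>"
    unfolding iter_def by (rule wfrec[OF wf])
  also have "\<dots> = (if \<exists>\<beta>. imm_pred \<beta> \<alpha> then F (iter T F (THE \<beta>. imm_pred \<beta> \<alpha>))
              else rInf T (iter T F ` {\<beta>. \<beta> < \<alpha>}))"
  proof (cases "\<exists>\<beta>. imm_pred \<beta> \<alpha>")
    case True
    then obtain b where b: "imm_pred b \<alpha>" by blast
    then have "(THE \<beta>. imm_pred \<beta> \<alpha>) = b" using imm_pred_unique by blast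
    with True b show ?thesis by (simp add: cut_apply imm_pred_def)
  next
    case False
    have "cut (iter T F) {(x, y). x < y} \<alpha> ` {\<beta>. \<beta> < \<alpha>} = iter T F ` {\<beta>. \<beta> < \<alpha>}"
      by (auto simp: cut_apply)
    with False show ?thesis by simp
  qed
  finally show ?thesis .
qed

lemma iter_successor:
  assumes "imm_pred b a"
  shows "iter T F a = F (iter T F b)"
proof -
  have "(THE \<beta>. imm_pred \<beta> a) = b" using assms imm_pred_unique by blast
  with assms show ?thesis by (subst iter_unfold) auto
qed

lemma iter_limit: "\<not> (\<exists>b. imm_pred b a) \<Longrightarrow> iter T F a = rInf T (iter T F ` {b. b < a})"
  by (subst iter_unfold) auto

lemma restriction_iter:
  assumes "operator_on T F"
  shows "restriction T (iter T F a)"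
proof (induction a rule: successor_limit_induct)
  case (successor a b)
  with assms show ?case by (simp add: iter_successor operator_on_def)
next
  case (limit a)
  then show ?case by (simp add: iter_limit restriction_def rInf_def)
qed

lemma iter_antimono:
  fixes a b :: "'o::wellorder"
  assumes contracting: "\<And>S. F S \<le> S" and "a \<le> b"
  shows "iter T F b \<le> iter T F a"
  using \<open>a \<le> b\<close>
proof (induction b arbitrary: a rule: successor_limit_induct)
  case (successor b c)
  have step: "iter T F b \<le> iter T F c"
    using contracting by (simp add: iter_successor[OF successor.hyps(1)])
  from le_imm_pred_cases[OF successor.hyps(1) successor.prems] show ?case
  proof
    assume "a \<le> c"
    then show ?case by (rule order.trans[OF step successor.IH])
  qed simp
next
  case (limit b)
  then consider "a = b" | "a < b" by fastforce
  then show ?case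
    by cases (auto simp: iter_limit[OF limit.hyps(1)] rInf_def le_fun_def)
qed

lemma iter_le_iter:
  fixes a :: "'o::wellorder"
  assumes "mono F" and F_le_R: "\<And>b::'o. F (iter T R b) \<le> R (iter T R b)"
  shows "iter T F a \<le> iter T R a"
proof (induction a rule: successor_limit_induct)
  case (successor a b)
  have "F (iter T F b) \<le> F (iter T R b)" using successor.IH by (rule monoD[OF \<open>mono F\<close>])
  also have "\<dots> \<le> R (iter T R b)" by (rule F_le_R)
  finally show ?case by (simp add: iter_successor[OF successor.hyps(1)])
next
  case (limit a)
  then show ?case by (simp add: iter_limit rInf_def le_fun_def) blast
qed

lemma fixpoint_le_iter:
  assumes "mono F" "restriction T G" "F G = G"
  shows "G \<le> iter T F a"
proof (induction a rule: successor_limit_induct)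
  case (successor a b)
  have "F G \<le> F (iter T F b)" using successor.IH by (rule monoD[OF \<open>mono F\<close>])
  with \<open>F G = G\<close> show ?case by (simp add: iter_successor[OF successor.hyps(1)])
next
  case (limit a)
  with \<open>restriction T G\<close> show ?case
    by (simp add: iter_limit rInf_def restriction_def le_fun_def) blast
qed

lemma stable_if_iter_eq:
  fixes a b :: "'o::wellorder"
  assumes contracting: "\<And>S. F S \<le> S" and "a < b" "iter T F a = iter T F b"
  shows "stable T F a"
proof -
  obtain s where s: "imm_pred a s" "s \<le> b" using ex_imm_pred_le[OF \<open>a < b\<close>] by blast
  have "iter T F b \<le> iter T F s" using contracting \<open>s \<le> b\<close> by (rule iter_antimono)
  moreover have "iter T F s \<le> iter T F a"
    using contracting imm_pred_less[OF s(1)] by (simp add: iter_antimono)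
  ultimately have "iter T F s = iter T F a" using assms(3) by simp
  then show ?thesis by (simp add: stable_def iter_successor[OF s(1)])
qed

text \<open>The hypothesis on \<open>'o\<close> says that the index type is too large to be embedded into the
  restrictions, so the iteration cannot keep shrinking forever.\<close>

lemma has_outcome_if_contracting:
  fixes T :: "'i \<Rightarrow> 'a set"
  assumes contracting: "\<And>S. F S \<le> S"
    and long_enough: "\<not> (\<exists>f :: 'o::wellorder \<Rightarrow> ('i \<Rightarrow> 'a set). inj f)"
  shows "has_outcome T F TYPE('o)"
proof (rule ccontr)
  assume "\<not> has_outcome T F TYPE('o)"
  then have "inj (iter T F :: 'o \<Rightarrow> _)"
    using stable_if_iter_eq[OF contracting] by (intro linorder_injI) (auto simp: has_outcome_def)
  with long_enough show False by blast
qed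

lemma outcome_fixpoint: "has_outcome T F ot \<Longrightarrow> F (outcome T F ot) = outcome T F ot"
  unfolding has_outcome_def outcome_def by (metis LeastI stable_def)

lemma restriction_outcome: "operator_on T F \<Longrightarrow> restriction T (outcome T F ot)"
  unfolding outcome_def by (rule restriction_iter)

lemma fixpoint_le_outcome:
  "mono F \<Longrightarrow> restriction T G \<Longrightarrow> F G = G \<Longrightarrow> G \<le> outcome T F ot"
  unfolding outcome_def by (rule fixpoint_le_iter)

lemma outcome_relaxation_eq:
  fixes ot :: "'o::wellorder itself"
  assumes "mono F" "operator_on T F" "has_outcome T F ot"
    and R: "relaxation T F R ot" "has_outcome T R ot"
  shows "outcome T R ot = outcome T F ot"
proof (rule antisym)
  have "R (outcome T R ot) = outcome T R ot" using R(2) by (rule outcome_fixpoint)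
  then have "F (outcome T R ot) = outcome T R ot"
    using R(1) by (simp add: relaxation_def outcome_def)
  moreover have "restriction T (outcome T R ot)"
    using R(1) by (simp add: relaxation_def restriction_outcome)
  ultimately show "outcome T R ot \<le> outcome T F ot"
    using \<open>mono F\<close> by (simp add: fixpoint_le_outcome)
next
  define a :: 'o where "a = (LEAST a. stable T R a)"
  have "outcome T F ot \<le> iter T F a"
    using assms(1-3) by (simp add: fixpoint_le_iter outcome_fixpoint restriction_outcome)
  also have "\<dots> \<le> iter T R a"
    using R(1) unfolding relaxation_def by (intro iter_le_iter[OF \<open>mono F\<close>]) blast
  also have "\<dots> = outcome T R ot" by (simp only: outcome_def a_def)
  finally show "outcome T F ot \<le> outcome T R ot" .
qed

lemma order_independent_if_mono:
  assumes "mono F" "operator_on T F" "has_outcome T F ot"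
  shows "order_independent T F ot"
  unfolding order_independent_def
proof (intro allI impI)
  let ?outcomes = "{outcome T R ot | R. relaxation T F R ot \<and> has_outcome T R ot}"
  have eq: "X = outcome T F ot" if "X \<in> ?outcomes" for X
    using that outcome_relaxation_eq[OF assms] by auto
  fix X Y
  assume "X \<in> ?outcomes" "Y \<in> ?outcomes"
  from this[THEN eq] show "X = Y" by simp
qed

lemma GSbar_le: "GSbar T p S \<le> S"
  by (auto simp: GSbar_def le_fun_def)

lemma operator_on_GSbar: "operator_on T (GSbar T p)"
  by (auto simp: operator_on_def GSbar_def GS_def restriction_def)

lemma sdom_antimono: "G \<le> S \<Longrightarrow> sdom p S i s' s \<Longrightarrow> sdom p G i s' s"
  unfolding sdom_def le_fun_def by blast

lemma mono_GSbar: "mono (GSbar T p)"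
proof (rule monoI)
  show "GSbar T p G \<le> GSbar T p S" if "G \<le> S" for G S
    using sdom_antimono[OF that] that unfolding GSbar_def GS_def le_fun_def by blast
qed

theorem mainTheorem8:
  fixes T :: "'i::finite \<Rightarrow> 'a set"
    and p :: "'i \<Rightarrow> ('i \<Rightarrow> 'a) \<Rightarrow> real"
  assumes nonempty: "\<And>i. T i \<noteq> {}"
    and long_enough: "\<not> (\<exists>f :: 'o::wellorder \<Rightarrow> ('i \<Rightarrow> 'a set). inj f)"
  shows "(has_outcome T (GSbar T p) TYPE('o)
         \<and> restriction T (outcome T (GSbar T p) TYPE('o))
         \<and> GSbar T p (outcome T (GSbar T p) TYPE('o)) = outcome T (GSbar T p) TYPE('o)
         \<and> (\<forall>G. restriction T G \<and> GSbar T p G = G \<longrightarrow> G \<le> outcome T (GSbar T p) TYPE('o)))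
         \<and> order_independent T (GSbar T p) TYPE('o)
         \<and> (\<forall>R. relaxation T (GSbar T p) R TYPE('o) \<longrightarrow>
           (\<forall>\<alpha>::'o. iter T (GSbar T p) \<alpha> \<le> iter T R \<alpha>))"
proof -
  have has_outcome: "has_outcome T (GSbar T p) TYPE('o)"
    using GSbar_le long_enough by (rule has_outcome_if_contracting)
  have "iter T (GSbar T p) \<alpha> \<le> iter T R \<alpha>"
    if "relaxation T (GSbar T p) R TYPE('o)" for R and \<alpha> :: 'o
    using that by (intro iter_le_iter[OF mono_GSbar]) (simp add: relaxation_def)
  then show ?thesis
    using has_outcome outcome_fixpoint[OF has_outcome] restriction_outcome[OF operator_on_GSbar]
      fixpoint_le_outcome[OF mono_GSbar] order_independent_if_mono[OF mono_GSbar operator_on_GSbar]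
    by blast
qed

end
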